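(* Let $F:(0,\infty)\to(0,\infty)$ be strictly decreasing and let $(x_n)_{n\in\mathbb Z}$ be an equilibrium configuration for $F$ that is periodic, i.e. there are an integer $k\ge1$ and a real $t>0$ with $x_{n+k}=x_n+t$ for all $n\in\mathbb Z$. Then the configuration is trivial.
   Context: A force law is a strictly decreasing function $F:(0,\infty)\to(0,\infty)$; two particles at distance $d$ repel each other with force of magnitude $F(d)$. A configuration is a strictly increasing bi-infinite sequence $(x_n)_{n\in\mathbb Z}$ of reals. The particle at $x_n$ is in equilibrium if $\sum_{m<n}F(x_n-x_m)$ and $\sum_{m>n}F(x_m-x_n)$ are both finite and equal. An equilibrium configuration is a configuration in which every particle is in equilibrium. It is trivial if $x_{n+1}-x_n$ is constant. *)

theory Defs
  imports "HOL-Analysis.Analysis"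
begin

text \<open>Modelled as a total function real => real whose restriction to (0,inf) has
  positive values and is strictly decreasing; values outside (0,inf) are irrelevant.\<close>
definition force_law :: "(real \<Rightarrow> real) \<Rightarrow> bool" where
  "force_law F \<longleftrightarrow> (\<forall>d>0. F d > 0) \<and> (\<forall>d e. 0 < d \<longrightarrow> d < e \<longrightarrow> F e < F d)"

definition configuration :: "(int \<Rightarrow> real) \<Rightarrow> bool" where
  "configuration x \<longleftrightarrow> strict_mono x"

text \<open>Particle n is in equilibrium: both one-sided force sums are finite and equal.
  The terms are positive, so summability on the index set is the same as finiteness.\<close>
definition in_equilibrium :: "(real \<Rightarrow> real) \<Rightarrow> (int \<Rightarrow> real) \<Rightarrow> int \<Rightarrow> bool" where
  "in_equilibrium F x n \<longleftrightarrow>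
     (\<lambda>m. F (x n - x m)) summable_on {..<n} \<and>
     (\<lambda>m. F (x m - x n)) summable_on {n<..} \<and>
     (\<Sum>\<^sub>\<infinity>m\<in>{..<n}. F (x n - x m)) = (\<Sum>\<^sub>\<infinity>m\<in>{n<..}. F (x m - x n))"

definition equilibrium_configuration :: "(real \<Rightarrow> real) \<Rightarrow> (int \<Rightarrow> real) \<Rightarrow> bool" where
  "equilibrium_configuration F x \<longleftrightarrow> configuration x \<and> (\<forall>n. in_equilibrium F x n)"

definition trivial_configuration :: "(int \<Rightarrow> real) \<Rightarrow> bool" where
  "trivial_configuration x \<longleftrightarrow> (\<exists>c. \<forall>n. x (n + 1) - x n = c)"

end

theory Submission
  imports Defs
begin

text \<open>With \<open>c = t / k\<close>, the drift-corrected positions \<open>x m - m c\<close> are \<open>k\<close>-periodic and hence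
  attain a maximum at some \<open>n\<close>. Then \<open>x m - x n \<le> (m - n) c \<le> x n - x (2n - m)\<close> for
  \<open>m > n\<close>: every particle to the right of \<open>n\<close> pushes at least as hard as its mirror image
  on the left. Equilibrium at \<open>n\<close> makes the two sums equal, so all these inequalities are
  equalities, and strict monotonicity of \<open>F\<close> forces \<open>x m = x n + (m - n) c\<close> for all \<open>m\<close>.\<close>

lemma force_law_antimono:
  assumes "force_law F" "0 < d" "d \<le> e"
  shows "F e \<le> F d"
  using assms unfolding force_law_def by (metis less_eq_real_def order_refl)

lemma force_law_inj:
  assumes "force_law F" "0 < d" "0 < e" "F d = F e"
  shows "d = e"
  using assms unfolding force_law_def by (metis linorder_neq_iff order_less_irrefl)

lemma shift_periodic_nat:
  assumes "\<And>n. x (n + k) = x n + (t::real)"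
  shows "x (n + int q * k) = x n + real q * t"
proof (induction q)
  case (Suc q)
  have "x (n + int (Suc q) * k) = x (n + int q * k) + t"
    using assms[of "n + int q * k"] by (simp add: algebra_simps)
  with Suc show ?case by (simp add: algebra_simps)
qed simp

lemma shift_periodic_int:
  assumes "\<And>n. x (n + k) = x n + (t::real)"
  shows "x (n + q * k) = x n + of_int q * t"
proof (cases "q \<ge> 0")
  case True
  then show ?thesis using shift_periodic_nat[where x = x, OF assms, of n "nat q"] by simp
next
  case False
  have "x ((n + q * k) + int (nat (-q)) * k) = x (n + q * k) + real (nat (-q)) * t"
    using shift_periodic_nat[where x = x, OF assms] by blast
  with False show ?thesis by (simp add: algebra_simps)
qed

lemma periodic_drift_attains_max:
  assumes "\<And>n. x (n + k) = x n + (t::real)" "k \<ge> 1"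
  obtains n where "\<And>m. x m - of_int m * (t / of_int k) \<le> x n - of_int n * (t / of_int k)"
proof -
  define y where "y m = x m - of_int m * (t / of_int k)" for m
  have y_mod: "y m = y (m mod k)" for m
  proof -
    have "x m = x (m mod k) + of_int (m div k) * t"
      using shift_periodic_int[where x = x, OF assms(1), of "m mod k" "m div k"] by simp
    moreover have "real_of_int m = of_int (m mod k) + of_int (m div k) * of_int k"
      by (metis div_mult_mod_eq add.commute of_int_add of_int_mult)
    ultimately show ?thesis using assms(2) unfolding y_def by (simp add: field_simps)
  qed
  have fin: "finite (y ` {0..<k})" "y ` {0..<k} \<noteq> {}" using assms(2) by auto
  obtain n where n: "y n = Max (y ` {0..<k})"
    using Max_in[OF fin] by auto
  have "y m \<le> y n" for m
    using y_mod[of m] n Max_ge[OF fin(1)] assms(2) by simp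
  then show ?thesis using that unfolding y_def by blast
qed

lemma has_sum_mono_eq_imp_eq:
  fixes f g :: "'a \<Rightarrow> real"
  assumes "(f has_sum s) A" "(g has_sum s) A" "\<And>m. m \<in> A \<Longrightarrow> f m \<le> g m" "m \<in> A"
  shows "f m = g m"
  using has_sum_strict_mono[OF assms(1,2) assms(3) assms(4)] assms(3)[OF assms(4)]
  by fastforce

lemma in_equilibrium_reflected:
  assumes "in_equilibrium F x n"
  defines "s \<equiv> \<Sum>\<^sub>\<infinity>m\<in>{n<..}. F (x m - x n)"
  shows "((\<lambda>m. F (x m - x n)) has_sum s) {n<..}"
    and "((\<lambda>m. F (x n - x (2*n - m))) has_sum s) {n<..}"
proof -
  have bij: "bij_betw (\<lambda>m. 2*n - m) {n<..} {..<n}"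
    by (rule bij_betwI[where g = "\<lambda>m. 2*n - m"]) auto
  from assms(1) show "((\<lambda>m. F (x m - x n)) has_sum s) {n<..}"
    unfolding in_equilibrium_def s_def by (simp add: has_sum_infsum)
  from assms(1) have "((\<lambda>m. F (x n - x m)) has_sum s) {..<n}"
    unfolding in_equilibrium_def s_def by (metis has_sum_infsum)
  then show "((\<lambda>m. F (x n - x (2*n - m))) has_sum s) {n<..}"
    using has_sum_reindex_bij_betw[OF bij, of "\<lambda>m. F (x n - x m)"] by simp
qed

lemma equilibrium_below_line_imp_affine:
  assumes F: "force_law F" and mono: "strict_mono x" and eq: "in_equilibrium F x n"
    and below: "\<And>m. x m - of_int m * c \<le> x n - of_int n * c"
  shows "x m = x n + of_int (m - n) * c"
proof -
  define d where "d m = of_int (m - n) * c" for m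
  have right: "0 < x m - x n" "x m - x n \<le> d m" if "m > n" for m
    using mono below[of m] that unfolding strict_mono_def d_def by (auto simp: algebra_simps)
  have left: "d m \<le> x n - x (2*n - m)" for m
    using below[of "2*n - m"] unfolding d_def by (simp add: algebra_simps)
  have d_pos: "0 < d m" if "m > n" for m
    using right[OF that] by linarith
  have sandwich: "F (x n - x (2*n - m)) \<le> F (d m)" "F (d m) \<le> F (x m - x n)" if "m > n" for m
    using force_law_antimono[OF F d_pos left] force_law_antimono[OF F right] that by auto
  have left_le_right: "F (x n - x (2*n - m)) \<le> F (x m - x n)" if "m \<in> {n<..}" for m
    using sandwich that by (meson greaterThan_iff order_trans)
  have both_on_line: "x m - x n = d m \<and> x n - x (2*n - m) = d m" if "m > n" for m
  proof -
    have "F (x n - x (2*n - m)) = F (x m - x n)"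
      using has_sum_mono_eq_imp_eq[OF in_equilibrium_reflected(2,1)[OF eq] left_le_right]
        that by simp
    with sandwich[OF that] have "F (x m - x n) = F (d m)" "F (x n - x (2*n - m)) = F (d m)"
      by linarith+
    moreover have "0 < x n - x (2*n - m)"
      using d_pos[OF that] left[of m] by linarith
    ultimately show ?thesis
      using force_law_inj[OF F] right(1) d_pos that by blast
  qed
  consider "m > n" | "m = n" | "2*n - m > n" by linarith
  then show ?thesis
  proof cases
    case 1
    then show ?thesis using both_on_line[OF 1] unfolding d_def by linarith
  next
    case 3
    then show ?thesis using both_on_line[OF 3] unfolding d_def by (simp add: algebra_simps)
  qed simp
qed

theorem mainTheorem2:
  fixes F :: "real \<Rightarrow> real" and x :: "int \<Rightarrow> real" and k :: int and t :: real
  assumes "force_law F"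
    and "equilibrium_configuration F x"
    and "k \<ge> 1" and "t > 0"
    and "\<forall>n. x (n + k) = x n + t"
  shows "trivial_configuration x"
proof -
  have mono: "strict_mono x" and eq: "\<And>n. in_equilibrium F x n"
    using assms(2) unfolding equilibrium_configuration_def configuration_def by auto
  define c where "c = t / of_int k"
  obtain n where "\<And>m. x m - of_int m * c \<le> x n - of_int n * c"
    using periodic_drift_attains_max assms(3,5) unfolding c_def by blast
  then have affine: "x m = x n + of_int (m - n) * c" for m
    using equilibrium_below_line_imp_affine[OF assms(1) mono eq] by blast
  have "x (m + 1) - x m = c" for m
    using affine[of "m + 1"] affine[of m] by (simp add: algebra_simps)
  then show ?thesis unfolding trivial_configuration_def by blast
qed

end
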